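(* Let $\mathcal T$ be an admissible tree. Then: (i) every inner edge incident to a white-empty vertex is of type $(q_\circ=2:q_\bullet=1)$; (ii) every NHP inner edge $e$, joining a black-occupied vertex $v$ to a white-occupied vertex $w$, is of type $(q_\circ=-1:q_\bullet=4)$, the two other edges at $v$ are inner edges to white-empty vertices, one of the other two edges at $w$ joins $w$ to a black-empty vertex carrying two buds, and the remaining edge at $w$ is either a leaf or an inner edge to a black-empty vertex; (iii) every inner edge joining a black-empty vertex to a white-occupied vertex is of type $(2:1)$ or $(5:-2)$, and in the latter case the black-empty vertex carries two buds and the white-occupied vertex is incident to exactly one NHP inner edge.
   Context: A blossom tree is a plane tree whose inner vertices are black or white, all of degree 3, whose inner edges join black to white inner vertices, and whose degree-one ends are buds (attached to black inner vertices, charge $-1$) or leaves (attached to white inner vertices, charge $+1$), with total charge $3$. Removing an inner edge $e$ splits the tree into two parts; $q_\circ$ (resp. $q_\bullet$) is the total charge of the part containing the white (resp. black) endpoint; $e$ is of type $(q_\circ:q_\bullet)$, and is regular if $q_\circ\ge0$ and $q_\bullet\le1$. Each inner vertex is empty or occupied by a particle; an inner edge is HP if at most one endpoint is occupied, NHP if both are. An admissible tree is such a tree in which every HP inner edge is regular and every NHP inner edge is non-regular. *)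

theory Defs
  imports Main
begin

text \<open>A blossom tree (plane embedding ignored: it plays no role in the statement).
  V: inner vertices; black v: colour (otherwise white);
  E: inner edges, each stored as (white endpoint, black endpoint);
  pend v: number of degree-one ends attached at v (buds if v is black, leaves if white);
  occ v: v is occupied by a particle.\<close>

definition adj :: "('v \<times> 'v) set \<Rightarrow> 'v \<Rightarrow> 'v \<Rightarrow> bool" where
  "adj F x y \<longleftrightarrow> (x, y) \<in> F \<or> (y, x) \<in> F"

definition vcharge :: "('v \<Rightarrow> bool) \<Rightarrow> ('v \<Rightarrow> nat) \<Rightarrow> 'v \<Rightarrow> int" where
  "vcharge black pend v = (if black v then - int (pend v) else int (pend v))"

definition charge :: "('v \<Rightarrow> bool) \<Rightarrow> ('v \<Rightarrow> nat) \<Rightarrow> 'v set \<Rightarrow> int" where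
  "charge black pend S = (\<Sum>v\<in>S. vcharge black pend v)"

definition comp :: "'v set \<Rightarrow> ('v \<times> 'v) set \<Rightarrow> 'v \<Rightarrow> 'v set" where
  "comp V F x = {y \<in> V. (adj F)\<^sup>*\<^sup>* x y}"

definition blossom_tree ::
  "'v set \<Rightarrow> ('v \<times> 'v) set \<Rightarrow> ('v \<Rightarrow> bool) \<Rightarrow> ('v \<Rightarrow> nat) \<Rightarrow> bool" where
  "blossom_tree V E black pend \<longleftrightarrow>
     finite V \<and> V \<noteq> {} \<and>
     E \<subseteq> {(w, b). w \<in> V \<and> b \<in> V \<and> \<not> black w \<and> black b} \<and>
     (\<forall>x\<in>V. \<forall>y\<in>V. (adj E)\<^sup>*\<^sup>* x y) \<and>
     card E + 1 = card V \<and>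
     (\<forall>v\<in>V. card {e \<in> E. fst e = v \<or> snd e = v} + pend v = 3) \<and>
     charge black pend V = 3"

definition q_white :: "'v set \<Rightarrow> ('v \<times> 'v) set \<Rightarrow> ('v \<Rightarrow> bool) \<Rightarrow> ('v \<Rightarrow> nat) \<Rightarrow> 'v \<times> 'v \<Rightarrow> int" where
  "q_white V E black pend e = charge black pend (comp V (E - {e}) (fst e))"

definition q_black :: "'v set \<Rightarrow> ('v \<times> 'v) set \<Rightarrow> ('v \<Rightarrow> bool) \<Rightarrow> ('v \<Rightarrow> nat) \<Rightarrow> 'v \<times> 'v \<Rightarrow> int" where
  "q_black V E black pend e = charge black pend (comp V (E - {e}) (snd e))"

definition regular :: "'v set \<Rightarrow> ('v \<times> 'v) set \<Rightarrow> ('v \<Rightarrow> bool) \<Rightarrow> ('v \<Rightarrow> nat) \<Rightarrow> 'v \<times> 'v \<Rightarrow> bool" where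
  "regular V E black pend e \<longleftrightarrow> q_white V E black pend e \<ge> 0 \<and> q_black V E black pend e \<le> 1"

definition NHP :: "('v \<Rightarrow> bool) \<Rightarrow> 'v \<times> 'v \<Rightarrow> bool" where
  "NHP occ e \<longleftrightarrow> occ (fst e) \<and> occ (snd e)"

definition HP :: "('v \<Rightarrow> bool) \<Rightarrow> 'v \<times> 'v \<Rightarrow> bool" where
  "HP occ e \<longleftrightarrow> \<not> NHP occ e"

definition admissible ::
  "'v set \<Rightarrow> ('v \<times> 'v) set \<Rightarrow> ('v \<Rightarrow> bool) \<Rightarrow> ('v \<Rightarrow> nat) \<Rightarrow> ('v \<Rightarrow> bool) \<Rightarrow> bool" where
  "admissible V E black pend occ \<longleftrightarrow>
     blossom_tree V E black pend \<and>
     (\<forall>e\<in>E. HP occ e \<longrightarrow> regular V E black pend e) \<and>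
     (\<forall>e\<in>E. NHP occ e \<longrightarrow> \<not> regular V E black pend e)"

end

theory Submission
  imports Defs
begin

text \<open>For an inner edge xy let q x y be the charge of the branch containing x once xy is cut.
  Then q x y + q y x = 3, and q x y is the charge at x plus the values q z x over the other
  neighbours z of x; induction over branches gives q x y \<equiv> 1 (mod 3) for black x and
  q x y \<equiv> 2 (mod 3) for white x. For an edge from white w to black b, admissibility says
  q w b \<ge> 2 on HP edges and, by the congruence, q w b \<le> -1 on NHP edges. Feeding these bounds
  into the recursion at a single vertex of degree three pins everything down: at an empty
  white vertex the recursion forces q w b \<le> 2; at the black end of an NHP edge q b w \<ge> 4 is
  only reached with no bud and two empty white neighbours contributing 2 each; at an empty
  black vertex q b w \<le> 1 leaves one bud with q b w = 1 or two buds with q b w = -2; and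
  at an occupied white vertex the possible contributions 4, 1, -2 of its other neighbours
  must add up to the value of q w b found so far.\<close>

section \<open>Paths in undirected graphs\<close>

definition del_edge :: "('v \<times> 'v) set \<Rightarrow> 'v \<Rightarrow> 'v \<Rightarrow> ('v \<times> 'v) set" where
  "del_edge F x y = F - {(x, y), (y, x)}"

definition nbrs :: "('v \<times> 'v) set \<Rightarrow> 'v \<Rightarrow> 'v set" where
  "nbrs F x = {z. adj F x z}"

lemma del_edge_commute: "del_edge F x y = del_edge F y x"
  by (auto simp: del_edge_def)

lemma edge_adj:
  assumes "(x, y) \<in> F"
  shows "adj F x y" "adj F y x"
  using assms by (auto simp: adj_def)

lemma adj_commute: "adj F x y \<longleftrightarrow> adj F y x"
  by (auto simp: adj_def)

lemma adj_rtranclp_sym: "(adj F)\<^sup>*\<^sup>* x y \<Longrightarrow> (adj F)\<^sup>*\<^sup>* y x"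
  by (metis adj_commute sympD sympI symp_rtranclp)

lemma adj_rtranclp_mono: "F \<subseteq> G \<Longrightarrow> (adj F)\<^sup>*\<^sup>* x y \<Longrightarrow> (adj G)\<^sup>*\<^sup>* x y"
  by (erule mono_rtranclp[rule_format, rotated]) (auto simp: adj_def)

lemma adj_rtranclp_closed:
  assumes "F \<subseteq> S \<times> S" "x \<in> S"
  shows "(adj F)\<^sup>*\<^sup>* x y \<Longrightarrow> y \<in> S"
  by (induction rule: rtranclp_induct) (use assms in \<open>auto simp: adj_def\<close>)

lemma adj_empty_rtranclp: "(adj {})\<^sup>*\<^sup>* x y \<Longrightarrow> x = y"
  by (induction rule: rtranclp_induct) (auto simp: adj_def)

lemma adj_rtranclp_del_edge_cases:
  "(adj F)\<^sup>*\<^sup>* a u \<Longrightarrow>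
     (adj (del_edge F p q))\<^sup>*\<^sup>* a u \<or> (adj F)\<^sup>*\<^sup>* a p \<or> (adj F)\<^sup>*\<^sup>* a q"
proof (induction rule: rtranclp_induct)
  case (step u v)
  show ?case
  proof (cases "adj (del_edge F p q) u v")
    case True
    with step.IH show ?thesis
      by (meson rtranclp.rtrancl_into_rtrancl step.hyps(1))
  next
    case False
    with step.hyps have "u = p \<or> u = q" by (auto simp: adj_def del_edge_def)
    with step show ?thesis by blast
  qed
qed simp

lemma adj_rtranclp_from_edge:
  "(adj F)\<^sup>*\<^sup>* x z \<Longrightarrow> (adj (del_edge F x y))\<^sup>*\<^sup>* x z \<or> (adj (del_edge F x y))\<^sup>*\<^sup>* y z"
proof (induction rule: rtranclp_induct)
  case (step u v)
  then show ?case
    by (cases "adj (del_edge F x y) u v")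
      (auto simp: adj_def del_edge_def intro: rtranclp.rtrancl_into_rtrancl)
qed simp

lemma comp_connected:
  assumes FS: "F \<subseteq> S \<times> S" and x: "x \<in> S" and ab: "a \<in> comp S F x" "b \<in> comp S F x"
  shows "(adj (F \<inter> comp S F x \<times> comp S F x))\<^sup>*\<^sup>* a b"
proof -
  let ?C = "comp S F x"
  have from_x: "(adj (F \<inter> ?C \<times> ?C))\<^sup>*\<^sup>* x z" if "(adj F)\<^sup>*\<^sup>* x z" for z
    using that
  proof (induction rule: rtranclp_induct)
    case (step u v)
    then have "u \<in> ?C" "v \<in> ?C"
      using adj_rtranclp_closed[OF FS x] by (auto simp: comp_def intro: rtranclp.rtrancl_into_rtrancl)
    with step.hyps(2) have "adj (F \<inter> ?C \<times> ?C) u v"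
      by (auto simp: adj_def)
    with step.IH show ?case
      by (rule rtranclp.rtrancl_into_rtrancl)
  qed simp
  from ab have "(adj (F \<inter> ?C \<times> ?C))\<^sup>*\<^sup>* x a" "(adj (F \<inter> ?C \<times> ?C))\<^sup>*\<^sup>* x b"
    using from_x unfolding comp_def by blast+
  then show ?thesis
    by (meson adj_rtranclp_sym rtranclp_trans)
qed

lemma card_connected_le:
  assumes "finite S" "F \<subseteq> S \<times> S" "\<forall>x\<in>S. \<forall>y\<in>S. (adj F)\<^sup>*\<^sup>* x y"
  shows "card S \<le> card F + 1"
  using assms
proof (induction "card F" arbitrary: F S rule: less_induct)
  case less
  show ?case
  proof (cases "F = {}")
    case True
    with less.prems show ?thesis
      by (auto simp: card_le_Suc0_iff_eq dest: adj_empty_rtranclp)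
  next
    case False
    then obtain x y where xy: "(x, y) \<in> F" by auto
    with less.prems have xS: "x \<in> S" and yS: "y \<in> S" by auto
    define R where "R = del_edge F x y"
    have RS: "R \<subseteq> S \<times> S" using less.prems(2) by (auto simp: R_def del_edge_def)
    have "finite F" using less.prems(1,2) by (meson finite_SigmaI finite_subset)
    then have "finite R" by (simp add: R_def del_edge_def)
    then have "card R < card F" using xy by (auto simp: R_def del_edge_def intro: psubset_card_mono)
    have comp_edges: "card (R \<inter> comp S R c \<times> comp S R c) \<le> card R" for c
      using \<open>finite R\<close> by (intro card_mono) auto
    have comp_le: "card (comp S R c) \<le> card (R \<inter> comp S R c \<times> comp S R c) + 1" if "c \<in> S" for c
    proof (rule less.hyps)
      show "card (R \<inter> comp S R c \<times> comp S R c) < card F"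
        using comp_edges \<open>card R < card F\<close> by (rule le_less_trans)
    qed (use less.prems(1) comp_connected[OF RS that] in \<open>auto simp: comp_def\<close>)
    have S_eq: "S = comp S R x \<union> comp S R y"
      using less.prems(3) xS adj_rtranclp_from_edge[of F x _ y] by (auto simp: comp_def R_def)
    show ?thesis
    proof (cases "comp S R x \<inter> comp S R y = {}")
      case True
      let ?Rx = "R \<inter> comp S R x \<times> comp S R x" and ?Ry = "R \<inter> comp S R y \<times> comp S R y"
      have "card ?Rx + card ?Ry = card (?Rx \<union> ?Ry)"
        using True \<open>finite R\<close> by (intro card_Un_disjoint[symmetric]) auto
      also have "\<dots> \<le> card R"
        using \<open>finite R\<close> by (intro card_mono) auto
      finally have "card ?Rx + card ?Ry \<le> card R" .
      moreover have "card S = card (comp S R x) + card (comp S R y)"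
        using True less.prems(1) by (subst S_eq) (simp add: card_Un_disjoint comp_def)
      ultimately show ?thesis
        using comp_le[OF xS] comp_le[OF yS] \<open>card R < card F\<close> by linarith
    next
      case False
      then have "(adj R)\<^sup>*\<^sup>* x y"
        by (auto simp: comp_def intro: rtranclp_trans adj_rtranclp_sym)
      then have "comp S R y \<subseteq> comp S R x"
        by (auto simp: comp_def intro: rtranclp_trans)
      with S_eq have "card S = card (comp S R x)"
        by (metis sup.absorb1)
      then show ?thesis
        using comp_le[OF xS] comp_edges[of x] \<open>card R < card F\<close> by linarith
    qed
  qed
qed

lemma card_incident_edges:
  assumes "\<And>z. (x, z) \<in> F \<Longrightarrow> (z, x) \<notin> F"
  shows "card {e \<in> F. fst e = x \<or> snd e = x} = card (nbrs F x)"
proof (rule bij_betw_same_card[of "\<lambda>e. if fst e = x then snd e else fst e"])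
  let ?I = "{e \<in> F. fst e = x \<or> snd e = x}" and ?other = "\<lambda>e. if fst e = x then snd e else fst e"
  have "inj_on ?other ?I"
    using assms by (auto simp: inj_on_def)
  moreover have "nbrs F x \<subseteq> ?other ` ?I"
  proof
    fix z assume "z \<in> nbrs F x"
    then consider "(x, z) \<in> F" | "(z, x) \<in> F" by (auto simp: nbrs_def adj_def)
    then show "z \<in> ?other ` ?I"
      by cases (force intro: rev_image_eqI)+
  qed
  ultimately show "bij_betw ?other ?I (nbrs F x)"
    by (auto simp: bij_betw_def nbrs_def adj_def)
qed

section \<open>Branches of a tree\<close>

definition tree :: "'v set \<Rightarrow> ('v \<times> 'v) set \<Rightarrow> bool" where
  "tree V E \<longleftrightarrow>
     finite V \<and> E \<subseteq> V \<times> V \<and> (\<forall>x\<in>V. \<forall>y\<in>V. (adj E)\<^sup>*\<^sup>* x y) \<and> card E + 1 = card V"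

definition branch :: "'v set \<Rightarrow> ('v \<times> 'v) set \<Rightarrow> 'v \<Rightarrow> 'v \<Rightarrow> 'v set" where
  "branch V E x y = comp V (del_edge E x y) x"

lemma adj_del_edge:
  "adj F x z \<Longrightarrow> {x, z} \<noteq> {p, q} \<Longrightarrow> adj (del_edge F p q) x z"
  by (auto simp: adj_def del_edge_def doubleton_eq_iff)

lemma tree_adj_in:
  "tree V E \<Longrightarrow> adj E x y \<Longrightarrow> x \<in> V \<and> y \<in> V"
  by (auto simp: tree_def adj_def)

lemma finite_branch: "tree V E \<Longrightarrow> finite (branch V E x y)"
  by (simp add: tree_def branch_def comp_def)

lemma finite_nbrs:
  assumes "tree V E"
  shows "finite (nbrs E x)"
proof (rule finite_subset)
  show "nbrs E x \<subseteq> V"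
    using tree_adj_in[OF assms] by (auto simp: nbrs_def)
qed (use assms in \<open>simp add: tree_def\<close>)

lemma tree_del_edge_disconnects:
  assumes T: "tree V E" and xy: "adj E x y"
  shows "\<not> (adj (del_edge E x y))\<^sup>*\<^sup>* x y"
proof
  let ?R = "del_edge E x y"
  assume x_to_y: "(adj ?R)\<^sup>*\<^sup>* x y"
  \<comment> \<open>then V would stay connected with only card V - 2 edges\<close>
  have from_x: "(adj ?R)\<^sup>*\<^sup>* x z" if "z \<in> V" for z
  proof -
    have "x \<in> V" using tree_adj_in[OF T xy] by simp
    with T that have "(adj E)\<^sup>*\<^sup>* x z" by (simp add: tree_def)
    from adj_rtranclp_from_edge[OF this, of y]
    show ?thesis
      using x_to_y rtranclp_trans[of "adj ?R" x y z] by blast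
  qed
  have "card V \<le> card ?R + 1"
  proof (rule card_connected_le)
    show "finite V" using T by (simp add: tree_def)
    show "?R \<subseteq> V \<times> V" using T by (auto simp: tree_def del_edge_def)
    show "\<forall>u\<in>V. \<forall>v\<in>V. (adj ?R)\<^sup>*\<^sup>* u v"
      using from_x adj_rtranclp_sym rtranclp_trans by metis
  qed
  moreover have "finite E"
    using T finite_subset[of E "V \<times> V"] by (simp add: tree_def)
  then have "card ?R < card E"
    using xy by (auto simp: adj_def del_edge_def intro: psubset_card_mono)
  ultimately show False
    using T by (simp add: tree_def)
qed

lemma tree_adj_neq: "tree V E \<Longrightarrow> adj E x y \<Longrightarrow> x \<noteq> y"
  using tree_del_edge_disconnects by fastforce

lemma self_in_branch: "tree V E \<Longrightarrow> adj E x y \<Longrightarrow> x \<in> branch V E x y"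
  by (simp add: branch_def comp_def tree_adj_in)

lemma not_in_branch: "tree V E \<Longrightarrow> adj E x y \<Longrightarrow> y \<notin> branch V E x y"
  by (simp add: branch_def comp_def tree_del_edge_disconnects)

lemma branch_Un:
  assumes T: "tree V E" and xy: "adj E x y"
  shows "branch V E x y \<union> branch V E y x = V"
  using T tree_adj_in[OF T xy] adj_rtranclp_from_edge[of E x _ y]
  by (auto simp: tree_def branch_def comp_def del_edge_commute[of E y x])

lemma branch_disjoint:
  assumes T: "tree V E" and xy: "adj E x y"
  shows "branch V E x y \<inter> branch V E y x = {}"
  using not_in_branch[OF T xy] tree_adj_in[OF T xy]
  by (auto simp: branch_def comp_def del_edge_commute[of E y x]
      intro: rtranclp_trans adj_rtranclp_sym)

lemma branch_subset:
  assumes T: "tree V E" and xy: "adj E x y" and z: "z \<in> nbrs E x - {y}"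
  shows "branch V E z x \<subseteq> branch V E x y"
proof
  fix u assume "u \<in> branch V E z x"
  then have uV: "u \<in> V" and zu: "(adj (del_edge E z x))\<^sup>*\<^sup>* z u"
    by (auto simp: branch_def comp_def)
  have zx: "adj E z x" using z by (simp add: nbrs_def adj_commute)
  have "x \<noteq> y" using tree_adj_neq[OF T xy] .
  then have yx: "adj (del_edge E z x) y x" and xz: "adj (del_edge E x y) x z"
    using z xy by (auto simp: nbrs_def adj_commute intro!: adj_del_edge)
  have no_zx: "\<not> (adj (del_edge E z x))\<^sup>*\<^sup>* z x"
    using tree_del_edge_disconnects[OF T zx] .
  \<comment> \<open>so the path from z to u reaches neither x nor its neighbour y, and avoids xy as well\<close>
  from adj_rtranclp_del_edge_cases[OF zu, of x y] no_zx
  have "(adj (del_edge (del_edge E z x) x y))\<^sup>*\<^sup>* z u"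
    using yx by (meson rtranclp.rtrancl_into_rtrancl)
  then have "(adj (del_edge E x y))\<^sup>*\<^sup>* z u"
    by (rule adj_rtranclp_mono[rotated]) (auto simp: del_edge_def)
  with xz uV show "u \<in> branch V E x y"
    by (auto simp: branch_def comp_def intro: converse_rtranclp_into_rtranclp)
qed

lemma branch_nbrs_disjoint:
  assumes T: "tree V E" and z: "z1 \<in> nbrs E x" "z2 \<in> nbrs E x" "z1 \<noteq> z2"
  shows "branch V E z1 x \<inter> branch V E z2 x = {}"
proof -
  have "adj E x z1" using z by (simp add: nbrs_def)
  moreover have "branch V E z2 x \<subseteq> branch V E x z1"
    using z by (intro branch_subset[OF T]) (auto simp: nbrs_def)
  ultimately show ?thesis
    using branch_disjoint[OF T] by blast
qed

lemma branch_subset_nbrs_branches: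
  assumes "E \<subseteq> V \<times> V"
  shows "branch V E x y \<subseteq> insert x (\<Union>z\<in>nbrs E x - {y}. branch V E z x)"
proof
  fix u assume "u \<in> branch V E x y"
  then have "(adj (del_edge E x y))\<^sup>*\<^sup>* x u" by (simp add: branch_def comp_def)
  then show "u \<in> insert x (\<Union>z\<in>nbrs E x - {y}. branch V E z x)"
  proof (induction rule: rtranclp_induct)
    case (step u v)
    then have uv: "adj E u v" by (auto simp: adj_def del_edge_def)
    with assms have vV: "v \<in> V" by (auto simp: adj_def)
    show ?case
    proof (cases "u = x")
      case True
      with step.hyps(2) uv vV show ?thesis
        by (auto simp: nbrs_def adj_def del_edge_def branch_def comp_def)
    next
      case False
      with step.IH obtain z where z: "z \<in> nbrs E x - {y}" and u: "u \<in> branch V E z x"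
        by auto
      have "v = x \<or> v \<in> branch V E z x"
      proof (cases "adj (del_edge E z x) u v")
        case True
        with u vV show ?thesis
          by (auto simp: branch_def comp_def intro: rtranclp.rtrancl_into_rtrancl)
      next
        case False
        with uv have "v = x \<or> v = z" by (auto simp: adj_def del_edge_def)
        with vV show ?thesis by (auto simp: branch_def comp_def)
      qed
      with z show ?thesis by blast
    qed
  qed simp
qed

lemma branch_decompose:
  assumes T: "tree V E" and xy: "adj E x y"
  shows "branch V E x y = insert x (\<Union>z\<in>nbrs E x - {y}. branch V E z x)"
  using branch_subset_nbrs_branches[of E V x y] branch_subset[OF T xy] self_in_branch[OF T xy] T
  by (auto simp: tree_def)

lemma card_branch_less:
  assumes T: "tree V E" and xy: "adj E x y" and z: "z \<in> nbrs E x - {y}"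
  shows "card (branch V E z x) < card (branch V E x y)"
proof (rule psubset_card_mono[OF finite_branch[OF T]])
  have "x \<notin> branch V E z x"
    using z not_in_branch[OF T] by (simp add: nbrs_def adj_commute)
  then show "branch V E z x \<subset> branch V E x y"
    using branch_subset[OF T xy z] self_in_branch[OF T xy] by blast
qed

lemma charge_branch_sum:
  assumes T: "tree V E" and xy: "adj E x y"
  shows "charge black pend (branch V E x y) + charge black pend (branch V E y x) =
    charge black pend V"
  using sum.union_disjoint[OF finite_branch[OF T] finite_branch[OF T] branch_disjoint[OF T xy]]
  unfolding charge_def branch_Un[OF T xy] by metis

lemma charge_branch_rec:
  assumes T: "tree V E" and xy: "adj E x y"
  shows "charge black pend (branch V E x y) =
    vcharge black pend x + (\<Sum>z\<in>nbrs E x - {y}. charge black pend (branch V E z x))"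
proof -
  have "x \<notin> (\<Union>z\<in>nbrs E x - {y}. branch V E z x)"
    using not_in_branch[OF T] by (auto simp: nbrs_def adj_commute)
  moreover have "finite (\<Union>z\<in>nbrs E x - {y}. branch V E z x)"
    using finite_nbrs[OF T] finite_branch[OF T] by blast
  ultimately show ?thesis
    unfolding charge_def branch_decompose[OF T xy]
    using finite_nbrs[OF T] finite_branch[OF T] branch_nbrs_disjoint[OF T]
    by (simp add: sum.UNION_disjoint)
qed

section \<open>Charges of branches in blossom trees\<close>

locale blossom =
  fixes V :: "'v set" and E :: "('v \<times> 'v) set" and black :: "'v \<Rightarrow> bool"
    and pend :: "'v \<Rightarrow> nat"
  assumes blossom_tree: "blossom_tree V E black pend"
begin

definition q :: "'v \<Rightarrow> 'v \<Rightarrow> int" where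
  "q x y = charge black pend (branch V E x y)"

lemma is_tree: "tree V E"
  using blossom_tree by (auto simp: blossom_tree_def tree_def)

lemma edge_colours: "(w, b) \<in> E \<Longrightarrow> \<not> black w \<and> black b"
  using blossom_tree by (auto simp: blossom_tree_def)

lemma adj_colours: "adj E x y \<Longrightarrow> black x \<noteq> black y"
  using edge_colours by (auto simp: adj_def)

lemma white_nbr_edge: "(w, b) \<in> E \<Longrightarrow> z \<in> nbrs E w \<Longrightarrow> (w, z) \<in> E"
  using edge_colours by (auto simp: nbrs_def adj_def)

lemma black_nbr_edge: "(w, b) \<in> E \<Longrightarrow> z \<in> nbrs E b \<Longrightarrow> (z, b) \<in> E"
  using edge_colours by (auto simp: nbrs_def adj_def)

lemma card_nbrs_add_pend:
  assumes "x \<in> V"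
  shows "card (nbrs E x) + pend x = 3"
proof -
  have "card {e \<in> E. fst e = x \<or> snd e = x} = card (nbrs E x)"
    by (rule card_incident_edges) (use edge_colours in blast)
  moreover have "card {e \<in> E. fst e = x \<or> snd e = x} + pend x = 3"
    using blossom_tree assms by (auto simp: blossom_tree_def)
  ultimately show ?thesis
    by simp
qed

lemma card_other_nbrs_add_pend:
  assumes "adj E x y"
  shows "card (nbrs E x - {y}) + pend x = 2"
proof -
  have "y \<in> nbrs E x"
    using assms by (simp add: nbrs_def)
  then have "card (nbrs E x) = card (nbrs E x - {y}) + 1"
    using card_Suc_Diff1[OF finite_nbrs[OF is_tree]] by simp
  then show ?thesis
    using card_nbrs_add_pend tree_adj_in[OF is_tree assms] by force
qed

lemma other_nbrs_cases:
  assumes "adj E x y"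
  obtains "nbrs E x - {y} = {}" "pend x = 2"
    | a where "nbrs E x - {y} = {a}" "pend x = 1"
    | a c where "a \<noteq> c" "nbrs E x - {y} = {a, c}" "pend x = 0"
proof -
  consider "card (nbrs E x - {y}) = 0" "pend x = 2"
    | "card (nbrs E x - {y}) = 1" "pend x = 1"
    | "card (nbrs E x - {y}) = 2" "pend x = 0"
    using card_other_nbrs_add_pend[OF assms] by linarith
  then show thesis
  proof cases
    case 1
    then show ?thesis using that(1) finite_nbrs[OF is_tree, of x] by simp
  next
    case 2
    then show ?thesis using that(2) by (auto simp: card_1_singleton_iff)
  next
    case 3
    then show ?thesis using that(3) by (auto simp: card_2_iff)
  qed
qed

lemma Diff_edge_eq_del_edge: "(w, b) \<in> E \<Longrightarrow> E - {(w, b)} = del_edge E w b"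
  using edge_colours[of w b] edge_colours[of b w] by (auto simp: del_edge_def)

lemma q_white_eq: "(w, b) \<in> E \<Longrightarrow> q_white V E black pend (w, b) = q w b"
  by (simp add: q_white_def q_def branch_def Diff_edge_eq_del_edge)

lemma q_black_eq: "(w, b) \<in> E \<Longrightarrow> q_black V E black pend (w, b) = q b w"
  by (simp add: q_black_def q_def branch_def Diff_edge_eq_del_edge del_edge_commute)

lemma q_add_q: "adj E x y \<Longrightarrow> q x y + q y x = 3"
  using charge_branch_sum[OF is_tree] blossom_tree by (simp add: q_def blossom_tree_def)

lemma q_black_eq_3_minus:
  assumes "(w, b) \<in> E"
  shows "q_black V E black pend (w, b) = 3 - q_white V E black pend (w, b)"
  using q_add_q[OF edge_adj(1)[OF assms]] q_white_eq[OF assms] q_black_eq[OF assms] by simp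

lemma q_rec: "adj E x y \<Longrightarrow> q x y = vcharge black pend x + (\<Sum>z\<in>nbrs E x - {y}. q z x)"
  unfolding q_def by (rule charge_branch_rec[OF is_tree])

lemma q_rec_white:
  "(w, b) \<in> E \<Longrightarrow> q w b = int (pend w) + (\<Sum>z\<in>nbrs E w - {b}. q z w)"
  using q_rec[of w b] edge_colours[of w b] by (simp add: adj_def vcharge_def)

lemma q_rec_black:
  "(w, b) \<in> E \<Longrightarrow> q b w = - int (pend b) + (\<Sum>z\<in>nbrs E b - {w}. q z b)"
  using q_rec[of b w] edge_colours[of w b] by (simp add: adj_def vcharge_def)

lemma q_mod_3: "adj E x y \<Longrightarrow> q x y mod 3 = (if black x then 1 else 2)"
proof (induction "card (branch V E x y)" arbitrary: x y rule: less_induct)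
  case less
  let ?S = "nbrs E x - {y}" and ?r = "if black x then 2 else 1 :: int"
  have IH: "q z x mod 3 = ?r" if "z \<in> ?S" for z
  proof -
    have zx: "adj E z x"
      using that by (simp add: nbrs_def adj_commute)
    have "q z x mod 3 = (if black z then 1 else 2)"
      using less.hyps[OF card_branch_less[OF is_tree less.prems that] zx] .
    with adj_colours[OF zx] show ?thesis
      by auto
  qed
  have "(\<Sum>z\<in>?S. q z x) mod 3 = (\<Sum>z\<in>?S. q z x mod 3) mod 3"
    by (simp add: mod_sum_eq)
  also have "\<dots> = (int (card ?S) * ?r) mod 3"
    using IH by simp
  finally have "q x y mod 3 = (vcharge black pend x + int (card ?S) * ?r) mod 3"
    using q_rec[OF less.prems] by (metis mod_add_right_eq)
  moreover have "int (card ?S) = 2 - int (pend x)"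
    using card_other_nbrs_add_pend[OF less.prems] by linarith
  \<comment> \<open>white x: p + (2 - p) \<equiv> 2; black x: -p + 2 (2 - p) = 4 - 3 p \<equiv> 1\<close>
  ultimately show ?case
    by (cases "black x") (simp_all add: vcharge_def, presburger+)
qed

end

section \<open>Admissible trees\<close>

locale admissible_tree = blossom V E black pend
  for V :: "'v set" and E black pend +
  fixes occ :: "'v \<Rightarrow> bool"
  assumes HP_regular: "e \<in> E \<Longrightarrow> HP occ e \<Longrightarrow> regular V E black pend e"
    and NHP_not_regular: "e \<in> E \<Longrightarrow> NHP occ e \<Longrightarrow> \<not> regular V E black pend e"
begin

lemma q_ge_2_if_HP:
  assumes "(w, b) \<in> E" "\<not> occ w \<or> \<not> occ b"
  shows "q w b \<ge> 2"
proof -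
  have "q b w \<le> 1"
    using HP_regular[OF assms(1)] assms q_black_eq[OF assms(1)]
    by (auto simp: HP_def NHP_def regular_def)
  then show ?thesis
    using q_add_q[OF edge_adj(1)[OF assms(1)]] by linarith
qed

lemma q_le_minus_1_if_NHP:
  assumes "(w, b) \<in> E" "occ w" "occ b"
  shows "q w b \<le> -1"
proof -
  have "\<not> (q w b \<ge> 0 \<and> q b w \<le> 1)"
    using NHP_not_regular[OF assms(1)] assms q_white_eq[OF assms(1)] q_black_eq[OF assms(1)]
    by (simp add: NHP_def regular_def)
  moreover have "q w b + q b w = 3"
    using q_add_q[OF edge_adj(1)[OF assms(1)]] .
  ultimately have "q w b \<le> 1"
    by linarith
  moreover have "q w b mod 3 = 2"
    using q_mod_3[OF edge_adj(1)[OF assms(1)]] edge_colours[OF assms(1)] by simp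
  \<comment> \<open>the congruence rules out the values 0 and 1\<close>
  ultimately show ?thesis
    by presburger
qed

lemma q_at_empty_white:
  assumes wb: "(w, b) \<in> E" and empty: "\<not> occ w"
  shows "q w b = 2"
proof -
  have "q z w \<le> 1" if "z \<in> nbrs E w - {b}" for z
  proof -
    have wz: "(w, z) \<in> E"
      using white_nbr_edge[OF wb] that by blast
    then have "q w z \<ge> 2"
      using q_ge_2_if_HP empty by blast
    moreover have "q w z + q z w = 3"
      using q_add_q[OF edge_adj(1)[OF wz]] .
    ultimately show ?thesis
      by linarith
  qed
  then have "(\<Sum>z\<in>nbrs E w - {b}. q z w) \<le> int (card (nbrs E w - {b}))"
    using sum_bounded_above[of "nbrs E w - {b}" "\<lambda>z. q z w" 1] by simp
  moreover have "card (nbrs E w - {b}) + pend w = 2"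
    using card_other_nbrs_add_pend[OF edge_adj(1)[OF wb]] .
  moreover have "q w b \<ge> 2"
    using q_ge_2_if_HP[OF wb] empty by blast
  ultimately show ?thesis
    using q_rec_white[OF wb] by linarith
qed

lemma q_at_NHP_edge:
  assumes wb: "(w, b) \<in> E" and occ: "occ w" "occ b"
  shows "q w b = -1 \<and> pend b = 0 \<and> (\<forall>z\<in>nbrs E b - {w}. \<not> occ z)"
proof -
  have bound: "q z b \<le> 2 \<and> (occ z \<longrightarrow> q z b \<le> -1)" if "z \<in> nbrs E b - {w}" for z
  proof -
    have zb: "(z, b) \<in> E"
      using black_nbr_edge[OF wb] that by blast
    show ?thesis
      using q_at_empty_white[OF zb] q_le_minus_1_if_NHP[OF zb _ \<open>occ b\<close>] by (cases "occ z") auto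
  qed
  have sum: "q w b + q b w = 3"
    using q_add_q[OF edge_adj(1)[OF wb]] .
  with q_le_minus_1_if_NHP[OF wb occ] have "q b w \<ge> 4"
    by linarith
  from other_nbrs_cases[OF edge_adj(2)[OF wb]] show ?thesis
  proof cases
    case 1
    with q_rec_black[OF wb] \<open>q b w \<ge> 4\<close> show ?thesis
      by simp
  next
    case (2 a)
    with q_rec_black[OF wb] \<open>q b w \<ge> 4\<close> bound[of a] show ?thesis
      by simp
  next
    case (3 a c)
    with q_rec_black[OF wb] have "q b w = q a b + q c b"
      by simp
    with 3 bound[of a] bound[of c] sum \<open>q b w \<ge> 4\<close> show ?thesis
      by auto
  qed
qed

lemma q_at_empty_black:
  assumes wb: "(w, b) \<in> E" and empty: "\<not> occ b"
  shows "(pend b = 1 \<and> q b w = 1) \<or> (pend b = 2 \<and> q b w = -2)"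
proof -
  have bound: "q z b \<ge> 2" if "z \<in> nbrs E b - {w}" for z
    using q_ge_2_if_HP black_nbr_edge[OF wb] that empty by blast
  have "q w b \<ge> 2"
    using q_ge_2_if_HP[OF wb] empty by blast
  with q_add_q[OF edge_adj(1)[OF wb]] have "q b w \<le> 1"
    by linarith
  from other_nbrs_cases[OF edge_adj(2)[OF wb]] show ?thesis
  proof cases
    case 1
    with q_rec_black[OF wb] show ?thesis
      by simp
  next
    case (2 a)
    with q_rec_black[OF wb] \<open>q b w \<le> 1\<close> bound[of a] show ?thesis
      by simp
  next
    case (3 a c)
    with q_rec_black[OF wb] \<open>q b w \<le> 1\<close> bound[of a] bound[of c] show ?thesis
      by simp
  qed
qed

lemma q_nbr_of_occupied_white:
  assumes wz: "(w, z) \<in> E" and "occ w"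
  shows "(occ z \<and> q z w = 4) \<or> (\<not> occ z \<and> q z w = 1) \<or> (\<not> occ z \<and> pend z = 2 \<and> q z w = -2)"
proof (cases "occ z")
  case True
  then show ?thesis
    using q_at_NHP_edge[OF wz \<open>occ w\<close>] q_add_q[OF edge_adj(1)[OF wz]] by simp
next
  case False
  then show ?thesis
    using q_at_empty_black[OF wz] by auto
qed

lemma NHP_white_end:
  assumes wb: "(w, b) \<in> E" and occ: "occ w" "occ b"
  shows "\<exists>b1. (w, b1) \<in> E \<and> b1 \<noteq> b \<and> \<not> occ b1 \<and> pend b1 = 2 \<and>
           (pend w = 1 \<or> (\<exists>b2. (w, b2) \<in> E \<and> b2 \<noteq> b \<and> b2 \<noteq> b1 \<and> \<not> occ b2))"
proof -
  have "q w b = -1"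
    using q_at_NHP_edge[OF wb occ] by simp
  have nbr: "(w, z) \<in> E \<and> z \<noteq> b \<and>
      ((occ z \<and> q z w = 4) \<or> (\<not> occ z \<and> q z w = 1) \<or> (\<not> occ z \<and> pend z = 2 \<and> q z w = -2))"
    if "z \<in> nbrs E w - {b}" for z
  proof -
    have "(w, z) \<in> E"
      using white_nbr_edge[OF wb] that by blast
    with that q_nbr_of_occupied_white[OF _ \<open>occ w\<close>] show ?thesis
      by simp
  qed
  from other_nbrs_cases[OF edge_adj(1)[OF wb]] show ?thesis
  proof cases
    case 1
    with q_rec_white[OF wb] \<open>q w b = -1\<close> show ?thesis
      by simp
  next
    case (2 a)
    with q_rec_white[OF wb] \<open>q w b = -1\<close> have "q a w = -2"
      by simp
    with 2 nbr[of a] show ?thesis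
      by auto
  next
    case (3 a c)
    with q_rec_white[OF wb] \<open>q w b = -1\<close> have "q a w + q c w = -1"
      by simp
    with 3 nbr[of a] nbr[of c]
    consider "q a w = -2" "q c w = 1" | "q c w = -2" "q a w = 1"
      by fastforce
    then show ?thesis
    proof cases
      case 1
      with 3 nbr[of a] nbr[of c] show ?thesis
        by (intro exI[of _ a]) auto
    next
      case 2
      with 3 nbr[of a] nbr[of c] show ?thesis
        by (intro exI[of _ c]) auto
    qed
  qed
qed

lemma NHP_edges_at_white:
  assumes wb: "(w, b) \<in> E" and "occ w" "\<not> occ b"
  shows "{e \<in> E. fst e = w \<and> NHP occ e} = Pair w ` {z \<in> nbrs E w - {b}. occ z}"
proof (intro set_eqI iffI)
  fix e assume "e \<in> {e \<in> E. fst e = w \<and> NHP occ e}"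
  then obtain z where "e = (w, z)" "(w, z) \<in> E" "occ z"
    by (cases e) (auto simp: NHP_def)
  with \<open>\<not> occ b\<close> show "e \<in> Pair w ` {z \<in> nbrs E w - {b}. occ z}"
    by (auto simp: nbrs_def adj_def)
next
  fix e assume "e \<in> Pair w ` {z \<in> nbrs E w - {b}. occ z}"
  then obtain z where "e = (w, z)" "z \<in> nbrs E w" "occ z"
    by blast
  with white_nbr_edge[OF wb] \<open>occ w\<close> show "e \<in> {e \<in> E. fst e = w \<and> NHP occ e}"
    by (simp add: NHP_def)
qed

lemma card_NHP_edges_at_white:
  assumes wb: "(w, b) \<in> E" and "occ w" "\<not> occ b" "q b w = -2"
  shows "card {e \<in> E. fst e = w \<and> NHP occ e} = 1"
proof -
  have "q w b = 5"
    using q_add_q[OF edge_adj(1)[OF wb]] \<open>q b w = -2\<close> by simp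
  have nbr: "(occ z \<and> q z w = 4) \<or> (\<not> occ z \<and> q z w = 1) \<or> (\<not> occ z \<and> pend z = 2 \<and> q z w = -2)"
    if "z \<in> nbrs E w - {b}" for z
    using q_nbr_of_occupied_white[OF white_nbr_edge[OF wb] \<open>occ w\<close>] that by blast
  have "\<exists>a. {z \<in> nbrs E w - {b}. occ z} = {a}"
    using other_nbrs_cases[OF edge_adj(1)[OF wb]]
  proof cases
    case 1
    with q_rec_white[OF wb] \<open>q w b = 5\<close> show ?thesis
      by simp
  next
    case (2 a)
    with q_rec_white[OF wb] \<open>q w b = 5\<close> have "q a w = 4"
      by simp
    with 2 nbr[of a] have "{z \<in> nbrs E w - {b}. occ z} = {a}"
      by auto
    then show ?thesis ..
  next
    case (3 a c)
    with q_rec_white[OF wb] \<open>q w b = 5\<close> have "q a w + q c w = 5"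
      by simp
    with 3 nbr[of a] nbr[of c] have "occ a \<noteq> occ c"
      by fastforce
    with 3 have "{z \<in> nbrs E w - {b}. occ z} = {a} \<or> {z \<in> nbrs E w - {b}. occ z} = {c}"
      by auto
    then show ?thesis
      by blast
  qed
  then show ?thesis
    using NHP_edges_at_white[OF assms(1-3)] by auto
qed

lemma edge_type_at_empty_white:
  assumes "(w, b) \<in> E" "\<not> occ w"
  shows "q_white V E black pend (w, b) = 2 \<and> q_black V E black pend (w, b) = 1"
  using q_at_empty_white[OF assms] q_white_eq[OF assms(1)] q_black_eq_3_minus[OF assms(1)] by simp

lemma NHP_edge_structure:
  assumes wb: "(w, b) \<in> E" and "NHP occ (w, b)"
  shows "q_white V E black pend (w, b) = -1 \<and> q_black V E black pend (w, b) = 4 \<and>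
    pend b = 0 \<and> (\<forall>w'. (w', b) \<in> E \<and> w' \<noteq> w \<longrightarrow> \<not> occ w') \<and>
    (\<exists>b1. (w, b1) \<in> E \<and> b1 \<noteq> b \<and> \<not> occ b1 \<and> pend b1 = 2 \<and>
      (pend w = 1 \<or> (\<exists>b2. (w, b2) \<in> E \<and> b2 \<noteq> b \<and> b2 \<noteq> b1 \<and> \<not> occ b2)))"
proof -
  have occ: "occ w" "occ b"
    using \<open>NHP occ (w, b)\<close> by (simp_all add: NHP_def)
  show ?thesis
    using q_at_NHP_edge[OF wb occ] NHP_white_end[OF wb occ] q_white_eq[OF wb]
      q_black_eq_3_minus[OF wb]
    by (auto simp: nbrs_def adj_def)
qed

lemma edge_type_at_empty_black_occupied_white:
  assumes wb: "(w, b) \<in> E" and "\<not> occ b" "occ w"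
  shows "(q_white V E black pend (w, b) = 2 \<and> q_black V E black pend (w, b) = 1) \<or>
    (q_white V E black pend (w, b) = 5 \<and> q_black V E black pend (w, b) = -2 \<and>
     pend b = 2 \<and> card {e \<in> E. fst e = w \<and> NHP occ e} = 1)"
  using q_at_empty_black[OF assms(1,2)] card_NHP_edges_at_white[OF wb \<open>occ w\<close> \<open>\<not> occ b\<close>]
    q_black_eq[OF wb] q_black_eq_3_minus[OF wb]
  by auto

end

theorem mainTheorem3:
  fixes V :: "'v set" and E :: "('v \<times> 'v) set" and black occ :: "'v \<Rightarrow> bool"
    and pend :: "'v \<Rightarrow> nat"
  assumes adm: "admissible V E black pend occ"
  shows
   "(\<forall>w b. (w, b) \<in> E \<and> \<not> occ w \<longrightarrow>
        q_white V E black pend (w, b) = 2 \<and> q_black V E black pend (w, b) = 1)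
  \<and> (\<forall>w b. (w, b) \<in> E \<and> NHP occ (w, b) \<longrightarrow>
        q_white V E black pend (w, b) = -1 \<and> q_black V E black pend (w, b) = 4 \<and>
        pend b = 0 \<and> (\<forall>w'. (w', b) \<in> E \<and> w' \<noteq> w \<longrightarrow> \<not> occ w') \<and>
        (\<exists>b1. (w, b1) \<in> E \<and> b1 \<noteq> b \<and> \<not> occ b1 \<and> pend b1 = 2 \<and>
           (pend w = 1 \<or> (\<exists>b2. (w, b2) \<in> E \<and> b2 \<noteq> b \<and> b2 \<noteq> b1 \<and> \<not> occ b2))))
  \<and> (\<forall>w b. (w, b) \<in> E \<and> \<not> occ b \<and> occ w \<longrightarrow>
        (q_white V E black pend (w, b) = 2 \<and> q_black V E black pend (w, b) = 1) \<or>
        (q_white V E black pend (w, b) = 5 \<and> q_black V E black pend (w, b) = -2 \<and>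
         pend b = 2 \<and> card {e \<in> E. fst e = w \<and> NHP occ e} = 1))"
proof -
  interpret admissible_tree V E black pend occ
    using adm by unfold_locales (auto simp: admissible_def)
  show ?thesis
    using edge_type_at_empty_white NHP_edge_structure edge_type_at_empty_black_occupied_white
    by blast
qed

end
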